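(* Let $s,t$ be real numbers with $s > t > 0$ and let $n\geq 4$ be an integer. Then $|\det U_n| < M_n$, where $M_n$ is the maximum of $|\det A|$ over all $A \in \mathcal{G}_s^{n\times n}([0,t])$; that is, $U_n$ does not attain the maximum absolute determinant in $\mathcal{G}_s^{n\times n}([0,t])$.
   Context: For a real number $s$, a positive integer $n$ and a set $P \subseteq \mathbb{R}$, $\mathcal{G}_s^{n\times n}(P)$ denotes the set of all $n\times n$ real upper Hessenberg matrices $A=(a_{ij})$ with $a_{i+1,i} = s$ for $1\le i\le n-1$, $a_{ij}=0$ for $i > j+1$, and $a_{ij}\in P$ for all $i \le j$. $U_n = U_n(s,t)$ is the matrix in $\mathcal{G}_s^{n\times n}(\{0,t\})$ with $a_{ij} = t$ if $j \ge i$ and $j-i$ is even, and $a_{ij}=0$ if $j>i$ and $j-i$ is odd. *)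

theory Defs
  imports "Jordan_Normal_Form.Determinant"
begin

text \<open>Matrices are 0-indexed: entry (i,j) corresponds to a_{i+1,j+1} in the paper.\<close>

definition hess_set :: "real \<Rightarrow> nat \<Rightarrow> real set \<Rightarrow> real mat set" where
  "hess_set s n P = {A. A \<in> carrier_mat n n \<and>
     (\<forall>i. i + 1 < n \<longrightarrow> A $$ (i+1, i) = s) \<and>
     (\<forall>i<n. \<forall>j<n. i > j + 1 \<longrightarrow> A $$ (i, j) = 0) \<and>
     (\<forall>i<n. \<forall>j<n. i \<le> j \<longrightarrow> A $$ (i, j) \<in> P)}"

definition U_mat :: "nat \<Rightarrow> real \<Rightarrow> real \<Rightarrow> real mat" where
  "U_mat n s t = mat n n (\<lambda>(i, j).
     if i = j + 1 then s
     else if j \<ge> i \<and> even (j - i) then t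
     else 0)"

end

theory Submission
  imports Defs
begin

(* Let the upper entries of a Hessenberg matrix be t or 0 according to whether a row label p i
   differs from a column label p (j + 1).  Expanding along the last row, the leading k x k minor
   whose last column is replaced by the column of label b depends only on k and b, which gives a
   two-state recurrence.  For U_n the labels alternate (p = odd), and the leading minors satisfy
   u (k + 2) = t u (k + 1) + s^2 u k.  Flipping the labels of the rows 2 .. n - 2 (0-indexed)
   yields a matrix A of the same class with det A = u n + t (s^2 - t^2) u (n - 3), which exceeds
   det U_n = u n > 0 when s > t > 0. *)

definition col_minor :: "(nat \<Rightarrow> nat \<Rightarrow> 'a::comm_ring_1) \<Rightarrow> nat \<Rightarrow> (nat \<Rightarrow> 'a) \<Rightarrow> 'a mat" where
  "col_minor e k v = mat k k (\<lambda>(i, j). if Suc j < k then e i j else v i)"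

lemma det_col_minor_Suc_0: "det (col_minor e (Suc 0) v) = v 0"
  by (simp add: col_minor_def det_def)

lemma det_col_minor_Suc_Suc:
  assumes hessenberg_row: "\<And>j. j < k \<Longrightarrow> e (Suc k) j = 0"
  shows "det (col_minor e (Suc (Suc k)) v) =
    v (Suc k) * det (col_minor e (Suc k) (\<lambda>i. e i k)) - e (Suc k) k * det (col_minor e (Suc k) v)"
proof -
  let ?A = "col_minor e (Suc (Suc k)) v"
  have A: "?A \<in> carrier_mat (Suc (Suc k)) (Suc (Suc k))"
    by (simp add: col_minor_def)
  have del_k: "mat_delete ?A (Suc k) k = col_minor e (Suc k) v"
    by (rule eq_matI) (auto simp: col_minor_def mat_delete_def)
  have del_Suc_k: "mat_delete ?A (Suc k) (Suc k) = col_minor e (Suc k) (\<lambda>i. e i k)"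
    by (rule eq_matI) (auto simp: col_minor_def mat_delete_def less_Suc_eq)
  have "det ?A = (\<Sum>j<Suc (Suc k). ?A $$ (Suc k, j) * cofactor ?A (Suc k) j)"
    by (rule laplace_expansion_row[OF A]) simp
  also have "\<dots> = ?A $$ (Suc k, k) * cofactor ?A (Suc k) k + ?A $$ (Suc k, Suc k) * cofactor ?A (Suc k) (Suc k)"
    using hessenberg_row by (simp add: col_minor_def)
  also have "\<dots> = v (Suc k) * det (col_minor e (Suc k) (\<lambda>i. e i k)) - e (Suc k) k * det (col_minor e (Suc k) v)"
    using del_k del_Suc_k by (simp add: cofactor_def col_minor_def)
  finally show ?thesis .
qed

lemma abs_det_le_fact_mult_pow:
  fixes A :: "'a::linordered_idom mat"
  assumes A: "A \<in> carrier_mat n n" and bound: "\<And>i j. i < n \<Longrightarrow> j < n \<Longrightarrow> \<bar>A $$ (i, j)\<bar> \<le> M"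
  shows "\<bar>det A\<bar> \<le> fact n * M ^ n"
proof -
  have "\<bar>det A\<bar> = \<bar>\<Sum>p | p permutes {0..<n}. signof p * (\<Prod>i = 0..<n. A $$ (i, p i))\<bar>"
    using A unfolding det_def by simp
  also have "\<dots> \<le> (\<Sum>p | p permutes {0..<n}. \<bar>signof p * (\<Prod>i = 0..<n. A $$ (i, p i))\<bar>)"
    by (rule sum_abs)
  also have "\<dots> \<le> (\<Sum>p | p permutes {0..<n}. M ^ n)"
  proof (rule sum_mono)
    fix p assume "p \<in> {p. p permutes {0..<n}}"
    then have "i < n \<Longrightarrow> p i < n" for i
      using permutes_in_image by fastforce
    then have "(\<Prod>i = 0..<n. \<bar>A $$ (i, p i)\<bar>) \<le> (\<Prod>i = 0..<n. M)"
      by (intro prod_mono) (simp add: bound)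
    then show "\<bar>signof p * (\<Prod>i = 0..<n. A $$ (i, p i))\<bar> \<le> M ^ n"
      by (simp add: abs_mult abs_prod sign_def)
  qed
  also have "\<dots> = fact n * M ^ n"
    by (simp add: card_permutations of_nat_fact)
  finally show ?thesis .
qed

definition parity_entry :: "(nat \<Rightarrow> bool) \<Rightarrow> 'a::zero \<Rightarrow> 'a \<Rightarrow> nat \<Rightarrow> nat \<Rightarrow> 'a" where
  "parity_entry p s t i j = (if i = Suc j then s else if i \<le> j \<and> p i \<noteq> p (Suc j) then t else 0)"

definition parity_minor :: "(nat \<Rightarrow> bool) \<Rightarrow> 'a::comm_ring_1 \<Rightarrow> 'a \<Rightarrow> nat \<Rightarrow> bool \<Rightarrow> 'a" where
  "parity_minor p s t k b = det (col_minor (parity_entry p s t) k (\<lambda>i. if p i = b then 0 else t))"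

lemma parity_minor_Suc_0: "parity_minor p s t (Suc 0) b = (if p 0 = b then 0 else t)"
  by (simp add: parity_minor_def det_col_minor_Suc_0)

lemma parity_minor_Suc_Suc:
  "parity_minor p s t (Suc (Suc k)) b =
     (if p (Suc k) = b then 0 else t * parity_minor p s t (Suc k) (p (Suc k)))
     - s * parity_minor p s t (Suc k) b"
proof -
  have "col_minor (parity_entry p s t) (Suc k) (\<lambda>i. parity_entry p s t i k)
      = col_minor (parity_entry p s t) (Suc k) (\<lambda>i. if p i = p (Suc k) then 0 else t)"
    by (rule eq_matI) (auto simp: col_minor_def parity_entry_def)
  then show ?thesis
    unfolding parity_minor_def by (subst det_col_minor_Suc_Suc) (auto simp: parity_entry_def)
qed

lemma det_parity_mat: "det (mat n n (\<lambda>(i, j). parity_entry p s t i j)) = parity_minor p s t n (p n)"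
proof -
  have "(if Suc j < n then parity_entry p s t i j else if p i = p n then 0 else t) = parity_entry p s t i j"
    if "i < n" "j < n" for i j
  proof (cases "Suc j < n")
    case False
    with that have "Suc j = n"
      by simp
    with that show ?thesis
      by (auto simp: parity_entry_def)
  qed simp
  then have "mat n n (\<lambda>(i, j). parity_entry p s t i j)
      = col_minor (parity_entry p s t) n (\<lambda>i. if p i = p n then 0 else t)"
    by (intro eq_matI) (simp_all add: col_minor_def)
  then show ?thesis
    by (simp add: parity_minor_def)
qed

lemma parity_minor_alternating:
  assumes "p (Suc k) \<noteq> p (Suc (Suc k))" and "p (Suc (Suc k)) \<noteq> p (Suc (Suc (Suc k)))"
  shows "parity_minor p s t (Suc (Suc (Suc k))) (p (Suc (Suc (Suc k))))
    = t * parity_minor p s t (Suc (Suc k)) (p (Suc (Suc k))) + s\<^sup>2 * parity_minor p s t (Suc k) (p (Suc k))"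
proof -
  have "p (Suc (Suc (Suc k))) = p (Suc k)"
    using assms by blast
  with assms show ?thesis
    by (simp add: parity_minor_Suc_Suc[of p s t "Suc k"] parity_minor_Suc_Suc[of p s t k] power2_eq_square)
qed

lemma parity_minor_repeat_alternating:
  assumes "p (Suc k) = p (Suc (Suc k))" and "p (Suc (Suc k)) \<noteq> p (Suc (Suc (Suc k)))"
  shows "parity_minor p s t (Suc (Suc (Suc k))) (p (Suc (Suc (Suc k))))
    = - 2 * s * t * parity_minor p s t (Suc k) (p (Suc k)) + s\<^sup>2 * parity_minor p s t (Suc k) (\<not> p (Suc k))"
proof -
  have "p (Suc (Suc (Suc k))) = (\<not> p (Suc k))"
    using assms by blast
  with assms show ?thesis
    by (simp add: parity_minor_Suc_Suc[of p s t "Suc k"] parity_minor_Suc_Suc[of p s t k] power2_eq_square algebra_simps)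
qed

(* U_det s t 0 = 0, not the empty determinant 1, so that the recurrence already holds for k = 0. *)
fun U_det :: "real \<Rightarrow> real \<Rightarrow> nat \<Rightarrow> real" where
  "U_det s t 0 = 0"
| "U_det s t (Suc 0) = t"
| "U_det s t (Suc (Suc k)) = t * U_det s t (Suc k) + s\<^sup>2 * U_det s t k"

lemma U_det_pos: "0 < t \<Longrightarrow> 0 < n \<Longrightarrow> 0 < U_det s t n"
proof (induction s t n rule: U_det.induct)
  case (3 s t k)
  then have "0 \<le> U_det s t k"
    by (cases k) auto
  with 3 show ?case
    by (simp add: add_pos_nonneg)
qed simp_all

lemma U_mat_eq_parity_mat: "U_mat n s t = mat n n (\<lambda>(i, j). parity_entry odd s t i j)"
  by (rule eq_matI) (auto simp: U_mat_def parity_entry_def)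

lemma det_U_mat: "0 < n \<Longrightarrow> det (U_mat n s t) = U_det s t n"
  unfolding U_mat_eq_parity_mat det_parity_mat
proof (induction s t n rule: U_det.induct)
  case (3 s t k)
  show ?case
  proof (cases k)
    case 0
    then show ?thesis
      by (simp add: parity_minor_Suc_Suc parity_minor_Suc_0 power2_eq_square)
  next
    case (Suc j)
    have "parity_minor odd s t (Suc (Suc k)) (odd (Suc (Suc k)))
        = t * parity_minor odd s t (Suc k) (odd (Suc k)) + s\<^sup>2 * parity_minor odd s t k (odd k)"
      unfolding Suc by (rule parity_minor_alternating) simp_all
    with 3 Suc show ?thesis
      by simp
  qed
qed (simp_all add: parity_minor_Suc_0)

(* These labels fail to alternate only at the steps 1 -> 2 and n - 2 -> n - 1. *)
definition A_parity :: "nat \<Rightarrow> nat \<Rightarrow> bool" where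
  "A_parity n v = (odd v \<noteq> (2 \<le> v \<and> v + 2 \<le> n))"

definition A_mat :: "nat \<Rightarrow> real \<Rightarrow> real \<Rightarrow> real mat" where
  "A_mat n s t = mat n n (\<lambda>(i, j). parity_entry (A_parity n) s t i j)"

lemma A_mat_in_hess_set: "0 \<le> t \<Longrightarrow> A_mat n s t \<in> hess_set s n {0..t}"
  by (auto simp: hess_set_def A_mat_def parity_entry_def)

lemma A_leading_minor:
  assumes "k + 4 \<le> n"
  shows "parity_minor (A_parity n) s t (Suc (Suc k)) (A_parity n (Suc (Suc k)))
    = - s * (U_det s t (Suc k) + t * U_det s t k)"
  using assms
proof (induction k rule: less_induct)
  case (less k)
  let ?p = "A_parity n" and ?X = "parity_minor (A_parity n) s t"
  consider "k = 0" | "k = Suc 0" | j where "k = Suc (Suc j)"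
    by (metis not0_implies_Suc)
  then show ?case
  proof cases
    case 1
    with less.prems show ?thesis
      by (simp add: parity_minor_Suc_Suc parity_minor_Suc_0 A_parity_def)
  next
    case 2
    with less.prems show ?thesis
      by (simp add: parity_minor_Suc_Suc parity_minor_Suc_0 A_parity_def power2_eq_square algebra_simps)
  next
    case 3
    with less.prems have "?p (Suc (Suc j)) \<noteq> ?p (Suc (Suc (Suc j)))"
        "?p (Suc (Suc (Suc j))) \<noteq> ?p (Suc (Suc (Suc (Suc j))))"
      by (auto simp: A_parity_def)
    then have recurrence: "?X (Suc (Suc (Suc (Suc j)))) (?p (Suc (Suc (Suc (Suc j)))))
        = t * ?X (Suc (Suc (Suc j))) (?p (Suc (Suc (Suc j)))) + s\<^sup>2 * ?X (Suc (Suc j)) (?p (Suc (Suc j)))"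
      by (rule parity_minor_alternating)
    have IH: "?X (Suc (Suc (Suc j))) (?p (Suc (Suc (Suc j)))) = - s * (U_det s t (Suc (Suc j)) + t * U_det s t (Suc j))"
        "?X (Suc (Suc j)) (?p (Suc (Suc j))) = - s * (U_det s t (Suc j) + t * U_det s t j)"
      using 3 less.IH[of "Suc j"] less.IH[of j] less.prems by simp_all
    show ?thesis
      unfolding 3 recurrence IH by (simp add: power2_eq_square algebra_simps)
  qed
qed

lemma det_A_mat:
  assumes "4 \<le> n"
  shows "det (A_mat n s t) = U_det s t n + t * (s\<^sup>2 - t\<^sup>2) * U_det s t (n - 3)"
proof -
  define m where "m = n - 4"
  have n: "n = Suc (Suc (Suc (Suc m)))"
    using assms by (simp add: m_def)
  let ?p = "A_parity n" and ?X = "parity_minor (A_parity n) s t"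
  have "?p (Suc (Suc m)) = ?p (Suc (Suc (Suc m)))" "?p (Suc (Suc (Suc m))) \<noteq> ?p n"
    by (auto simp: A_parity_def n)
  then have "det (A_mat n s t)
      = - 2 * s * t * ?X (Suc (Suc m)) (?p (Suc (Suc m))) + s\<^sup>2 * ?X (Suc (Suc m)) (\<not> ?p (Suc (Suc m)))"
    using parity_minor_repeat_alternating[of ?p "Suc m" s t] by (simp add: A_mat_def det_parity_mat n)
  also have "\<dots> = U_det s t n + t * (s\<^sup>2 - t\<^sup>2) * U_det s t (n - 3)"
  proof (cases m)
    case 0
    with n show ?thesis
      by (simp add: parity_minor_Suc_Suc parity_minor_Suc_0 A_parity_def power2_eq_square algebra_simps)
  next
    case (Suc j)
    then have "?p (Suc m) \<noteq> ?p (Suc (Suc m))"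
      by (auto simp: A_parity_def n)
    then have flipped: "?X (Suc (Suc m)) (\<not> ?p (Suc (Suc m))) = - s * ?X (Suc m) (?p (Suc m))"
      by (simp add: parity_minor_Suc_Suc)
    have leading: "?X (Suc (Suc m)) (?p (Suc (Suc m))) = - s * (U_det s t (Suc m) + t * U_det s t m)"
        "?X (Suc m) (?p (Suc m)) = - s * (U_det s t (Suc j) + t * U_det s t j)"
      using Suc n A_leading_minor[of m n s t] A_leading_minor[of j n s t] by simp_all
    show ?thesis
      unfolding flipped leading by (simp add: n Suc power2_eq_square algebra_simps)
  qed
  finally show ?thesis .
qed

lemma bdd_above_abs_det_hess_set:
  assumes "0 \<le> s" and "0 \<le> t"
  shows "bdd_above ((\<lambda>A. \<bar>det A\<bar>) ` hess_set s n {0..t})"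
proof (rule bdd_aboveI2)
  fix A assume A: "A \<in> hess_set s n {0..t}"
  have "\<bar>A $$ (i, j)\<bar> \<le> s + t" if ij: "i < n" "j < n" for i j
  proof -
    consider "i = Suc j" | "Suc j < i" | "i \<le> j"
      by linarith
    then show ?thesis
    proof cases
      case 3
      with A ij have "A $$ (i, j) \<in> {0..t}"
        by (simp add: hess_set_def)
      with assms show ?thesis
        by simp
    qed (use A ij assms in \<open>auto simp: hess_set_def\<close>)
  qed
  with A show "\<bar>det A\<bar> \<le> fact n * (s + t) ^ n"
    by (intro abs_det_le_fact_mult_pow) (auto simp: hess_set_def)
qed

theorem proposition4p1:
  fixes s t :: real and n :: nat
  assumes "s > t" and "t > 0" and "n \<ge> 4"
  shows "\<bar>det (U_mat n s t)\<bar> < Sup ((\<lambda>A. \<bar>det A\<bar>) ` hess_set s n {0..t})"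
proof -
  have U_pos: "0 < U_det s t n" "0 < U_det s t (n - 3)"
    using assms by (simp_all add: U_det_pos)
  have "0 < t * (s\<^sup>2 - t\<^sup>2)"
    using assms by (simp add: power_strict_mono)
  with U_pos have "\<bar>det (U_mat n s t)\<bar> < \<bar>det (A_mat n s t)\<bar>"
    using assms by (simp add: det_U_mat det_A_mat)
  also have "\<dots> \<le> Sup ((\<lambda>A. \<bar>det A\<bar>) ` hess_set s n {0..t})"
    using assms A_mat_in_hess_set bdd_above_abs_det_hess_set by (intro cSup_upper) simp_all
  finally show ?thesis .
qed

end
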